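(* Let $n\ge1$, let $K$ be a compact set in $\mathbb{R}^n$ and let $u\in S^{n-1}$. Then $$\frac{|K+B_2^n|}{|P_{u^\perp}(K+B_2^n)|_{n-1}}\ge\frac{|B_2^n|}{|B_2^{n-1}|_{n-1}}.$$
   Context: $B_2^n$ is the closed Euclidean unit ball of $\mathbb{R}^n$, $S^{n-1}$ its boundary sphere, $B_2^{n-1}$ the $(n-1)$-dimensional Euclidean unit ball; $P_{u^\perp}$ is orthogonal projection onto the hyperplane $u^\perp=\{x:x\cdot u=0\}$; $|\cdot|_{k}$ is $k$-dimensional volume and $|\cdot|=|\cdot|_n$; $+$ is Minkowski addition. *)

theory Defs
  imports "HOL-Analysis.Analysis"
begin

definition minkowski_sum :: "'a::real_vector set \<Rightarrow> 'a set \<Rightarrow> 'a set" where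
  "minkowski_sum A B = {x + y | x y. x \<in> A \<and> y \<in> B}"

definition proj_perp :: "'a::euclidean_space \<Rightarrow> 'a \<Rightarrow> 'a" where
  "proj_perp u x = x - (x \<bullet> u) *\<^sub>R u"

definition perp_onb :: "'a::euclidean_space \<Rightarrow> (nat \<Rightarrow> 'a) \<Rightarrow> bool" where
  "perp_onb u b \<longleftrightarrow>
     (\<forall>i<DIM('a) - 1. b i \<bullet> u = 0 \<and> norm (b i) = 1) \<and>
     (\<forall>i<DIM('a) - 1. \<forall>j<DIM('a) - 1. i \<noteq> j \<longrightarrow> b i \<bullet> b j = 0)"

text \<open>Lebesgue measure on R^m, modelled as the product measure on functions {..<m} -> R.
  For m = 0 this is the unit point mass.\<close>
abbreviation lebesgue_dim :: "nat \<Rightarrow> (nat \<Rightarrow> real) measure" where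
  "lebesgue_dim m \<equiv> Pi\<^sub>M {..<m} (\<lambda>_. lborel)"

text \<open>(n-1)-dimensional volume of a subset S of the hyperplane u-perp in an n-dimensional
  Euclidean space: pull S back along the linear isometry R^(n-1) -> u-perp given by an
  orthonormal basis of u-perp and take the (n-1)-dimensional Lebesgue measure.\<close>
definition hyperplane_vol :: "'a::euclidean_space \<Rightarrow> 'a set \<Rightarrow> real" where
  "hyperplane_vol u S =
     (let b = (SOME b. perp_onb u b) in
      measure (lebesgue_dim (DIM('a) - 1))
        {y \<in> PiE {..<DIM('a) - 1} (\<lambda>_. UNIV). (\<Sum>i<DIM('a) - 1. y i *\<^sub>R b i) \<in> S})"

definition unit_ball_vol :: "nat \<Rightarrow> real" where
  "unit_ball_vol m =
     measure (lebesgue_dim m) {y \<in> PiE {..<m} (\<lambda>_. UNIV). (\<Sum>i<m. (y i)^2) \<le> 1}"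

end

theory Submission
  imports Defs
begin

text \<open>Write \<open>x = y + t u\<close> with \<open>y \<in> u\<^sup>\<bottom>\<close> in coordinates of an orthonormal basis of \<open>u\<^sup>\<bottom>\<close>; this
  identifies Lebesgue measure with the product measure on \<open>\<real>\<^sup>n\<^sup>-\<^sup>1 \<times> \<real>\<close>. Fix \<open>\<rho> > 1\<close> and cover \<open>K\<close> by
  finitely many balls \<open>B(c\<^sub>j, \<rho> - 1)\<close>, \<open>c\<^sub>j \<in> K\<close>. Then \<open>P(K + B)\<close> lies in the union of the
  \<open>(n-1)\<close>-balls \<open>B(P c\<^sub>j, \<rho>)\<close>, while \<open>K + B\<close> contains the union of the unit balls \<open>B(c\<^sub>j, 1)\<close>.
  Cut both unions along the Voronoi cells \<open>V\<^sub>j\<close> of the points \<open>P c\<^sub>j\<close>. Each cell is star-shaped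
  about \<open>P c\<^sub>j\<close>, and for a set \<open>C\<close> star-shaped about \<open>P c\<close> shrinking by \<open>1/\<rho>\<close> and Fubini give
  \<open>|B\<^sub>n| \<rho>\<^sup>1\<^sup>-\<^sup>n |C \<inter> B(P c, \<rho>)| \<le> |B\<^sub>n\<^sub>-\<^sub>1| |{x \<in> B(c, 1). P x \<in> C}|\<close>. Summing over the cells
  and letting \<open>\<rho> \<rightarrow> 1\<close> gives the theorem.\<close>

abbreviation ball_vol :: "nat \<Rightarrow> real" where
  "ball_vol n \<equiv> Ball_Volume.unit_ball_vol (real n)"

lemma le_if_scaled_le:
  fixes a b :: real
  assumes "\<And>\<rho>. 1 < \<rho> \<Longrightarrow> a * (1 / \<rho>) ^ m \<le> b"
  shows "a \<le> b"
proof -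
  have "((\<lambda>\<rho>. a * (1 / \<rho>) ^ m) \<longlongrightarrow> a * (1 / 1) ^ m) (at_right 1)"
    by (intro tendsto_intros) auto
  moreover have "eventually (\<lambda>\<rho>. a * (1 / \<rho>) ^ m \<le> b) (at_right (1::real))"
    using eventually_at_right_less[of "1::real"] by eventually_elim (rule assms)
  ultimately have "a * (1 / 1) ^ m \<le> b"
    by (rule tendsto_le[OF trivial_limit_at_right_real tendsto_const])
  then show ?thesis
    by simp
qed

section \<open>Lebesgue measure on finite products of the real line\<close>

lemma emeasure_lborel_affine_vimage:
  fixes a c :: real
  assumes a: "a > 0" and A: "A \<in> sets borel"
  shows "emeasure lborel {x. a * x + c \<in> A} = ennreal (1 / a) * emeasure lborel A"
proof -
  have "emeasure lborel A = emeasure (density (distr lborel borel (\<lambda>x. c + a * x)) (\<lambda>_. ennreal \<bar>a\<bar>)) A"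
    using lborel_real_affine[of a c] a by simp
  also have "\<dots> = ennreal a * emeasure lborel {x. a * x + c \<in> A}"
    using a A by (simp add: emeasure_density_const emeasure_distr vimage_def add.commute)
  finally have "ennreal (1 / a) * emeasure lborel A
      = (ennreal (1 / a) * ennreal a) * emeasure lborel {x. a * x + c \<in> A}"
    by (simp add: mult.assoc)
  also have "ennreal (1 / a) * ennreal a = 1"
    using a by (simp add: ennreal_mult'[symmetric])
  finally show ?thesis by simp
qed

lemma density_distr_PiM_lborel_affine:
  fixes a :: real and c :: "'i \<Rightarrow> real"
  assumes I: "finite I" and a: "a > 0"
  shows "density (distr (Pi\<^sub>M I (\<lambda>_. lborel)) (Pi\<^sub>M I (\<lambda>_. lborel)) (\<lambda>z. \<lambda>i\<in>I. a * z i + c i))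
           (\<lambda>_. ennreal (a ^ card I)) = Pi\<^sub>M I (\<lambda>_. lborel)"
    (is "density (distr ?M ?M ?f) _ = _")
proof -
  interpret product_sigma_finite "\<lambda>_. lborel :: real measure" by standard
  have f: "?f \<in> ?M \<rightarrow>\<^sub>M ?M"
    by measurable
  show ?thesis
  proof (rule PiM_eqI[OF I])
    show "sets (density (distr ?M ?M ?f) (\<lambda>_. ennreal (a ^ card I))) = sets ?M"
      by simp
    fix A assume A: "\<And>i. i \<in> I \<Longrightarrow> A i \<in> sets (lborel :: real measure)"
    have "Pi\<^sub>E I A \<in> sets ?M"
      using A by (auto intro: sets_PiM_I_finite I)
    moreover have "?f -` Pi\<^sub>E I A \<inter> space ?M = Pi\<^sub>E I (\<lambda>i. {x. a * x + c i \<in> A i})"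
      by (auto simp: space_PiM PiE_def Pi_def extensional_def)
    ultimately have "emeasure (density (distr ?M ?M ?f) (\<lambda>_. ennreal (a ^ card I))) (Pi\<^sub>E I A)
        = ennreal (a ^ card I) * emeasure ?M (Pi\<^sub>E I (\<lambda>i. {x. a * x + c i \<in> A i}))"
      using f by (simp add: emeasure_density_const emeasure_distr)
    also have "emeasure ?M (Pi\<^sub>E I (\<lambda>i. {x. a * x + c i \<in> A i}))
        = (\<Prod>i\<in>I. ennreal (1 / a) * emeasure lborel (A i))"
      using A I a by (subst emeasure_PiM) (auto intro!: prod.cong emeasure_lborel_affine_vimage)
    also have "ennreal (a ^ card I) * \<dots> = (ennreal a * ennreal (1 / a)) ^ card I * (\<Prod>i\<in>I. emeasure lborel (A i))"
      using a by (simp add: prod.distrib ennreal_power power_mult_distrib mult.assoc)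
    also have "ennreal a * ennreal (1 / a) = 1"
      using a by (simp add: ennreal_mult'[symmetric])
    finally show "emeasure (density (distr ?M ?M ?f) (\<lambda>_. ennreal (a ^ card I))) (Pi\<^sub>E I A)
        = (\<Prod>i\<in>I. emeasure lborel (A i))"
      by (simp add: restrict_def)
  qed
qed

lemma emeasure_PiM_affine_vimage:
  fixes a :: real and c :: "'i \<Rightarrow> real"
  assumes I: "finite I" and a: "a > 0" and X: "X \<in> sets (Pi\<^sub>M I (\<lambda>_. lborel))"
  shows "emeasure (Pi\<^sub>M I (\<lambda>_. lborel))
           {z \<in> space (Pi\<^sub>M I (\<lambda>_. lborel)). (\<lambda>i\<in>I. a * z i + c i) \<in> X}
         = ennreal ((1 / a) ^ card I) * emeasure (Pi\<^sub>M I (\<lambda>_. lborel)) X"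
    (is "emeasure ?M ?Y = _")
proof -
  have f: "(\<lambda>z. \<lambda>i\<in>I. a * z i + c i) \<in> ?M \<rightarrow>\<^sub>M ?M"
    by measurable
  have "emeasure ?M X = emeasure (density (distr ?M ?M (\<lambda>z. \<lambda>i\<in>I. a * z i + c i)) (\<lambda>_. ennreal (a ^ card I))) X"
    by (simp only: density_distr_PiM_lborel_affine[OF I a])
  also have "\<dots> = ennreal (a ^ card I) * emeasure ?M ?Y"
    using X f by (simp add: emeasure_density_const emeasure_distr vimage_def Int_def conj_commute)
  finally have "emeasure ?M X = ennreal (a ^ card I) * emeasure ?M ?Y" .
  then have "ennreal ((1 / a) ^ card I) * emeasure ?M X
      = (ennreal ((1 / a) ^ card I) * ennreal (a ^ card I)) * emeasure ?M ?Y"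
    by (simp add: mult.assoc)
  also have "ennreal ((1 / a) ^ card I) * ennreal (a ^ card I) = 1"
    using a by (simp add: ennreal_mult'[symmetric] power_mult_distrib[symmetric])
  finally show ?thesis
    by (simp add: restrict_def)
qed

lemma emeasure_PiM_cball:
  assumes I: "finite I" and r: "r > 0"
  shows "emeasure (Pi\<^sub>M I (\<lambda>_. lborel))
           {z \<in> space (Pi\<^sub>M I (\<lambda>_. lborel)). (\<Sum>i\<in>I. (z i - p i)\<^sup>2) \<le> r\<^sup>2}
         = ennreal (ball_vol (card I) * r ^ card I)"
proof -
  define B where "B = {f. sqrt (\<Sum>i\<in>I. (f i)\<^sup>2) \<le> r} \<inter> space (Pi\<^sub>M I (\<lambda>_. lborel :: real measure))"
  have B: "B \<in> sets (Pi\<^sub>M I (\<lambda>_. lborel))"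
    unfolding B_def using I by measurable
  have "sqrt (\<Sum>i\<in>I. ((\<lambda>i\<in>I. 1 * z i + - p i) i)\<^sup>2) \<le> r \<longleftrightarrow> (\<Sum>i\<in>I. (z i - p i)\<^sup>2) \<le> r\<^sup>2" for z
  proof -
    have "(\<Sum>i\<in>I. ((\<lambda>i\<in>I. 1 * z i + - p i) i)\<^sup>2) = (\<Sum>i\<in>I. (z i - p i)\<^sup>2)"
      by (intro sum.cong) auto
    then show ?thesis
      using r by (simp add: real_sqrt_le_iff' sum_nonneg)
  qed
  then have "{z \<in> space (Pi\<^sub>M I (\<lambda>_. lborel)). (\<Sum>i\<in>I. (z i - p i)\<^sup>2) \<le> r\<^sup>2}
      = {z \<in> space (Pi\<^sub>M I (\<lambda>_. lborel)). (\<lambda>i\<in>I. 1 * z i + - p i) \<in> B}"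
    unfolding B_def by (auto simp: space_PiM PiE_def extensional_def)
  also have "emeasure (Pi\<^sub>M I (\<lambda>_. lborel)) \<dots> = emeasure (Pi\<^sub>M I (\<lambda>_. lborel)) B"
    using emeasure_PiM_affine_vimage[OF I _ B, of 1 "\<lambda>i. - p i"] by simp
  also have "\<dots> = ennreal (ball_vol (card I) * r ^ card I)"
    unfolding B_def using emeasure_cball_aux[OF I r] by simp
  finally show ?thesis .
qed

lemma sigma_finite_lebesgue_dim: "sigma_finite_measure (lebesgue_dim m)"
proof -
  interpret product_sigma_finite "\<lambda>_. lborel :: real measure" by standard
  show ?thesis by (rule sigma_finite) simp
qed

lemma emeasure_pair_eq_PiM_insert:
  fixes S :: "(('i \<Rightarrow> real) \<times> real) set"
  assumes I: "finite I" and i: "i \<notin> I" and S: "S \<in> sets (Pi\<^sub>M I (\<lambda>_. lborel) \<Otimes>\<^sub>M lborel)"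
  shows "emeasure (Pi\<^sub>M I (\<lambda>_. lborel) \<Otimes>\<^sub>M lborel) S
    = emeasure (Pi\<^sub>M (insert i I) (\<lambda>_. lborel))
        {f \<in> space (Pi\<^sub>M (insert i I) (\<lambda>_. lborel)). (restrict f I, f i) \<in> S}"
proof -
  interpret product_sigma_finite "\<lambda>_. lborel :: real measure" by standard
  have "sigma_finite_measure (Pi\<^sub>M I (\<lambda>_. lborel :: real measure))"
    using I by (rule sigma_finite)
  then interpret pair_sigma_finite "Pi\<^sub>M I (\<lambda>_. lborel :: real measure)" "lborel :: real measure"
    by (intro pair_sigma_finite.intro lborel.sigma_finite_measure_axioms)
  let ?M = "Pi\<^sub>M I (\<lambda>_. lborel :: real measure)"
  define S' where "S' = {f \<in> space (Pi\<^sub>M (insert i I) (\<lambda>_. lborel)). (restrict f I, f i) \<in> S}"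
  have S': "S' \<in> sets (Pi\<^sub>M (insert i I) (\<lambda>_. lborel))"
    unfolding S'_def using S by measurable
  have slice: "indicator S' (x(i := y)) = (indicator ((\<lambda>x. (x, y)) -` S) x :: ennreal)"
    if x: "x \<in> space ?M" for x y
  proof -
    have "restrict (x(i := y)) I = x"
      using x i by (auto simp: space_PiM PiE_def extensional_def fun_eq_iff)
    moreover have "x(i := y) \<in> space (Pi\<^sub>M (insert i I) (\<lambda>_. lborel))"
      using x by (auto simp: space_PiM PiE_def extensional_def)
    ultimately show ?thesis
      unfolding S'_def by (auto simp: indicator_def)
  qed
  have "emeasure (Pi\<^sub>M (insert i I) (\<lambda>_. lborel)) S'
      = (\<integral>\<^sup>+f. indicator S' f \<partial>Pi\<^sub>M (insert i I) (\<lambda>_. lborel))"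
    using S' by simp
  also have "\<dots> = (\<integral>\<^sup>+y. (\<integral>\<^sup>+x. indicator S' (x(i := y)) \<partial>?M) \<partial>lborel)"
    using S' I i by (subst product_nn_integral_insert_rev) auto
  also have "\<dots> = (\<integral>\<^sup>+y. emeasure ?M ((\<lambda>x. (x, y)) -` S) \<partial>lborel)"
  proof (intro nn_integral_cong)
    fix y :: real
    have "(\<integral>\<^sup>+x. indicator S' (x(i := y)) \<partial>?M) = (\<integral>\<^sup>+x. indicator ((\<lambda>x. (x, y)) -` S) x \<partial>?M)"
      by (intro nn_integral_cong) (simp add: slice)
    then show "(\<integral>\<^sup>+x. indicator S' (x(i := y)) \<partial>?M) = emeasure ?M ((\<lambda>x. (x, y)) -` S)"
      using sets_Pair2[OF S] by simp
  qed
  also have "\<dots> = emeasure (?M \<Otimes>\<^sub>M lborel) S"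
    using S by (simp add: emeasure_pair_measure_alt2)
  finally show ?thesis
    unfolding S'_def by simp
qed

definition sqdist :: "nat \<Rightarrow> (nat \<Rightarrow> real) \<Rightarrow> (nat \<Rightarrow> real) \<Rightarrow> real" where
  "sqdist m z p = (\<Sum>i<m. (z i - p i)\<^sup>2)"

lemma borel_measurable_sqdist [measurable]: "(\<lambda>z. sqdist m z p) \<in> borel_measurable (lebesgue_dim m)"
  unfolding sqdist_def by measurable

lemma emeasure_sqdist_ball:
  "r > 0 \<Longrightarrow> emeasure (lebesgue_dim m) {z \<in> space (lebesgue_dim m). sqdist m z p \<le> r\<^sup>2}
     = ennreal (ball_vol m * r ^ m)"
  using emeasure_PiM_cball[of "{..<m}" r p] by (simp add: sqdist_def)

lemma emeasure_pair_sqdist_ball: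
  assumes r: "r > 0"
  shows "emeasure (lebesgue_dim m \<Otimes>\<^sub>M lborel)
           {x \<in> space (lebesgue_dim m \<Otimes>\<^sub>M lborel). sqdist m (fst x) p + (snd x - s)\<^sup>2 \<le> r\<^sup>2}
         = ennreal (ball_vol (Suc m) * r ^ Suc m)"
proof -
  define S where "S = {x \<in> space (lebesgue_dim m \<Otimes>\<^sub>M lborel). sqdist m (fst x) p + (snd x - s)\<^sup>2 \<le> r\<^sup>2}"
  have S: "S \<in> sets (lebesgue_dim m \<Otimes>\<^sub>M lborel)"
    unfolding S_def by measurable
  have "sqdist m (restrict f {..<m}) p + (f m - s)\<^sup>2 = (\<Sum>i\<in>insert m {..<m}. (f i - (p(m := s)) i)\<^sup>2)" for f
    by (simp add: sqdist_def)
  then have "{f \<in> space (Pi\<^sub>M (insert m {..<m}) (\<lambda>_. lborel)). (restrict f {..<m}, f m) \<in> S}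
      = {f \<in> space (Pi\<^sub>M (insert m {..<m}) (\<lambda>_. lborel)). (\<Sum>i\<in>insert m {..<m}. (f i - (p(m := s)) i)\<^sup>2) \<le> r\<^sup>2}"
    unfolding S_def by (auto simp: space_pair_measure space_PiM PiE_def)
  then have "emeasure (lebesgue_dim m \<Otimes>\<^sub>M lborel) S = ennreal (ball_vol (card (insert m {..<m})) * r ^ card (insert m {..<m}))"
    using emeasure_pair_eq_PiM_insert[OF _ _ S, of m] emeasure_PiM_cball[OF _ r, of "insert m {..<m}" "p(m := s)"]
    by simp
  then show ?thesis
    unfolding S_def by simp
qed

lemma unit_ball_vol_eq: "unit_ball_vol m = ball_vol m"
proof -
  have "{y \<in> PiE {..<m} (\<lambda>_. UNIV). (\<Sum>i<m. (y i)\<^sup>2) \<le> 1}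
      = {z \<in> space (lebesgue_dim m). sqdist m z (\<lambda>_. 0) \<le> 1\<^sup>2}"
    by (simp add: sqdist_def space_PiM)
  then show ?thesis
    using emeasure_sqdist_ball[of 1 m "\<lambda>_. 0"] by (simp add: unit_ball_vol_def measure_def)
qed

lemma ball_vol_Suc_eq_nn_integral:
  "ennreal (ball_vol (Suc m)) =
     ennreal (ball_vol m) * (\<integral>\<^sup>+t. indicator {s - 1<..<s + 1} t * ennreal (sqrt (1 - (t - s)\<^sup>2) ^ m) \<partial>lborel)"
proof -
  have "(\<integral>\<^sup>+t. indicator {s - 1<..<s + 1} t * ennreal (sqrt (1 - (t - s)\<^sup>2) ^ m) \<partial>lborel)
      = (\<integral>\<^sup>+x. indicator {-1<..<1} x * ennreal (sqrt (1 - x\<^sup>2) ^ m) \<partial>lborel)"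
    by (subst nn_integral_real_affine[where c = 1 and t = s]) (auto simp: indicator_def)
  also have "\<dots> = (\<integral>\<^sup>+x. indicator {-1..1} x * ennreal (sqrt (1 - x\<^sup>2) ^ m) \<partial>lborel)"
  proof (rule nn_integral_cong_AE)
    have "AE x in lborel. x \<notin> {-1, 1}"
      by (intro AE_not_in countable_imp_null_set_lborel) auto
    then show "AE x in lborel. indicator {-1<..<1} x * ennreal (sqrt (1 - x\<^sup>2) ^ m)
        = indicator {-1..1} x * ennreal (sqrt (1 - x\<^sup>2) ^ m)"
      by eventually_elim (auto simp: indicator_def)
  qed
  also have "\<dots> = ennreal (Beta (1 / 2) (real m / 2 + 1))"
    unfolding emeasure_cball_aux_integral[of m, symmetric]
    by (intro nn_integral_cong) (simp add: indicator_def)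
  finally have "ennreal (ball_vol m) *
      (\<integral>\<^sup>+t. indicator {s - 1<..<s + 1} t * ennreal (sqrt (1 - (t - s)\<^sup>2) ^ m) \<partial>lborel)
      = ennreal (ball_vol m * Beta (1 / 2) (real m / 2 + 1))"
    by (simp add: ennreal_mult'[symmetric])
  also have "ball_vol m * Beta (1 / 2) (real m / 2 + 1) = ball_vol (Suc m)"
    by (auto simp: Ball_Volume.unit_ball_vol_def Beta_def Gamma_eq_zero_iff field_simps
          Gamma_one_half_real powr_half_sqrt [symmetric] powr_add [symmetric])
  finally show ?thesis ..
qed

section \<open>Star-shaped sets\<close>

definition homothety :: "nat \<Rightarrow> (nat \<Rightarrow> real) \<Rightarrow> real \<Rightarrow> (nat \<Rightarrow> real) \<Rightarrow> nat \<Rightarrow> real" where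
  "homothety m p r z = (\<lambda>i\<in>{..<m}. p i + r * (z i - p i))"

definition star_shaped_at :: "nat \<Rightarrow> (nat \<Rightarrow> real) \<Rightarrow> (nat \<Rightarrow> real) set \<Rightarrow> bool" where
  "star_shaped_at m p C \<longleftrightarrow> (\<forall>z\<in>C. \<forall>r. 0 < r \<and> r \<le> 1 \<longrightarrow> homothety m p r z \<in> C)"

lemma sqdist_homothety: "sqdist m (homothety m p r z) p = r\<^sup>2 * sqdist m z p"
  unfolding sqdist_def homothety_def by (simp add: sum_distrib_left power_mult_distrib)

lemma emeasure_star_shaped_shrink:
  assumes C: "C \<in> sets (lebesgue_dim m)" and star: "star_shaped_at m p C"
    and h: "0 < h" "h \<le> 1"
  shows "ennreal (h ^ m) * emeasure (lebesgue_dim m) {z \<in> C. sqdist m z p \<le> R}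
         \<le> emeasure (lebesgue_dim m) {z \<in> C. sqdist m z p \<le> h\<^sup>2 * R}"
proof -
  define C1 where "C1 = {z \<in> C. sqdist m z p \<le> R}"
  have C1: "C1 \<in> sets (lebesgue_dim m)"
    unfolding C1_def using C by measurable
  define D where "D = {z \<in> space (lebesgue_dim m). (\<lambda>i\<in>{..<m}. (1 / h) * z i + (p i - p i / h)) \<in> C1}"
  have "emeasure (lebesgue_dim m) D = ennreal (h ^ m) * emeasure (lebesgue_dim m) C1"
    unfolding D_def using emeasure_PiM_affine_vimage[OF _ _ C1, of "1 / h"] h by simp
  moreover have "D \<subseteq> {z \<in> C. sqdist m z p \<le> h\<^sup>2 * R}"
  proof
    fix z assume "z \<in> D"
    then have z: "z \<in> space (lebesgue_dim m)"
      and w: "(\<lambda>i\<in>{..<m}. (1 / h) * z i + (p i - p i / h)) \<in> C1" (is "?w \<in> C1")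
      unfolding D_def by auto
    have "z = homothety m p h ?w"
      using z h by (auto simp: homothety_def space_PiM PiE_def extensional_def fun_eq_iff field_simps)
    moreover have "homothety m p h ?w \<in> C"
      using star w h unfolding star_shaped_at_def C1_def by blast
    moreover have "sqdist m (homothety m p h ?w) p \<le> h\<^sup>2 * R"
      using w unfolding sqdist_homothety C1_def by (simp add: mult_left_mono)
    ultimately show "z \<in> {z \<in> C. sqdist m z p \<le> h\<^sup>2 * R}"
      by simp
  qed
  then have "emeasure (lebesgue_dim m) D \<le> emeasure (lebesgue_dim m) {z \<in> C. sqdist m z p \<le> h\<^sup>2 * R}"
    by (rule emeasure_mono) (use C in measurable)
  ultimately show ?thesis
    unfolding C1_def by simp
qed

lemma emeasure_unit_ball_over_star_shaped_ge:
  assumes C: "C \<in> sets (lebesgue_dim m)" and star: "star_shaped_at m p C"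
  shows "emeasure (lebesgue_dim m) {z \<in> C. sqdist m z p \<le> 1} *
           (\<integral>\<^sup>+t. indicator {s - 1<..<s + 1} t * ennreal (sqrt (1 - (t - s)\<^sup>2) ^ m) \<partial>lborel)
         \<le> emeasure (lebesgue_dim m \<Otimes>\<^sub>M lborel)
             {x \<in> space (lebesgue_dim m \<Otimes>\<^sub>M lborel). fst x \<in> C \<and> sqdist m (fst x) p + (snd x - s)\<^sup>2 \<le> 1}"
    (is "?C1 * _ \<le> emeasure _ ?G")
proof -
  interpret pair_sigma_finite "lebesgue_dim m" "lborel :: real measure"
    by (intro pair_sigma_finite.intro sigma_finite_lebesgue_dim lborel.sigma_finite_measure_axioms)
  have G: "?G \<in> sets (lebesgue_dim m \<Otimes>\<^sub>M lborel)"
    using C by measurable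
  have slice: "indicator {s - 1<..<s + 1} t * ennreal (sqrt (1 - (t - s)\<^sup>2) ^ m) * ?C1
      \<le> emeasure (lebesgue_dim m) ((\<lambda>z. (z, t)) -` ?G)" for t
  proof (cases "t \<in> {s - 1<..<s + 1}")
    case True
    then have "(t - s)\<^sup>2 < 1"
      by (simp add: abs_square_less_1 abs_less_iff)
    define h where "h = sqrt (1 - (t - s)\<^sup>2)"
    have h: "0 < h" "h \<le> 1"
      using \<open>(t - s)\<^sup>2 < 1\<close> by (auto simp: h_def)
    have "ennreal (h ^ m) * ?C1 \<le> emeasure (lebesgue_dim m) {z \<in> C. sqdist m z p \<le> h\<^sup>2 * 1}"
      by (rule emeasure_star_shaped_shrink[OF C star h])
    also have "\<dots> \<le> emeasure (lebesgue_dim m) ((\<lambda>z. (z, t)) -` ?G)"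
      using \<open>(t - s)\<^sup>2 < 1\<close> sets.sets_into_space[OF C] sets_Pair2[OF G]
      by (intro emeasure_mono) (auto simp: h_def space_pair_measure)
    finally show ?thesis
      using True by (simp add: h_def mult.commute)
  qed simp
  have "?C1 * (\<integral>\<^sup>+t. indicator {s - 1<..<s + 1} t * ennreal (sqrt (1 - (t - s)\<^sup>2) ^ m) \<partial>lborel)
      = (\<integral>\<^sup>+t. indicator {s - 1<..<s + 1} t * ennreal (sqrt (1 - (t - s)\<^sup>2) ^ m) * ?C1 \<partial>lborel)"
    by (subst nn_integral_multc) (auto simp: mult.commute)
  also have "\<dots> \<le> (\<integral>\<^sup>+t. emeasure (lebesgue_dim m) ((\<lambda>z. (z, t)) -` ?G) \<partial>lborel)"
    by (intro nn_integral_mono slice)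
  also have "\<dots> = emeasure (lebesgue_dim m \<Otimes>\<^sub>M lborel) ?G"
    using G by (rule emeasure_pair_measure_alt2[symmetric])
  finally show ?thesis .
qed

lemma emeasure_star_shaped_le_unit_ball_over:
  assumes C: "C \<in> sets (lebesgue_dim m)" and star: "star_shaped_at m p C" and \<rho>: "\<rho> \<ge> 1"
  shows "ennreal (ball_vol (Suc m)) * ennreal ((1 / \<rho>) ^ m) *
           emeasure (lebesgue_dim m) {z \<in> C. sqdist m z p \<le> \<rho>\<^sup>2}
         \<le> ennreal (ball_vol m) * emeasure (lebesgue_dim m \<Otimes>\<^sub>M lborel)
             {x \<in> space (lebesgue_dim m \<Otimes>\<^sub>M lborel). fst x \<in> C \<and> sqdist m (fst x) p + (snd x - s)\<^sup>2 \<le> 1}"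
proof -
  let ?J = "\<integral>\<^sup>+t. indicator {s - 1<..<s + 1} t * ennreal (sqrt (1 - (t - s)\<^sup>2) ^ m) \<partial>lborel"
  have "ennreal ((1 / \<rho>) ^ m) * emeasure (lebesgue_dim m) {z \<in> C. sqdist m z p \<le> \<rho>\<^sup>2}
      \<le> emeasure (lebesgue_dim m) {z \<in> C. sqdist m z p \<le> (1 / \<rho>)\<^sup>2 * \<rho>\<^sup>2}"
    using \<rho> by (intro emeasure_star_shaped_shrink[OF C star]) auto
  also have "{z \<in> C. sqdist m z p \<le> (1 / \<rho>)\<^sup>2 * \<rho>\<^sup>2} = {z \<in> C. sqdist m z p \<le> 1}"
    using \<rho> by (simp add: power_divide)
  finally have shrink: "ennreal ((1 / \<rho>) ^ m) * emeasure (lebesgue_dim m) {z \<in> C. sqdist m z p \<le> \<rho>\<^sup>2}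
      \<le> emeasure (lebesgue_dim m) {z \<in> C. sqdist m z p \<le> 1}" .
  have "ennreal (ball_vol (Suc m)) * ennreal ((1 / \<rho>) ^ m) * emeasure (lebesgue_dim m) {z \<in> C. sqdist m z p \<le> \<rho>\<^sup>2}
      \<le> ennreal (ball_vol m) * ?J * emeasure (lebesgue_dim m) {z \<in> C. sqdist m z p \<le> 1}"
    unfolding ball_vol_Suc_eq_nn_integral[of m s] mult.assoc by (intro mult_left_mono shrink) auto
  also have "\<dots> \<le> ennreal (ball_vol m) * emeasure (lebesgue_dim m \<Otimes>\<^sub>M lborel)
      {x \<in> space (lebesgue_dim m \<Otimes>\<^sub>M lborel). fst x \<in> C \<and> sqdist m (fst x) p + (snd x - s)\<^sup>2 \<le> 1}"
    unfolding mult.assoc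
    by (intro mult_left_mono) (auto simp: mult.commute intro: emeasure_unit_ball_over_star_shaped_ge[OF C star])
  finally show ?thesis .
qed

section \<open>Voronoi cells\<close>

lemma sqrt_sqdist_triangle: "sqrt (sqdist m z q) \<le> sqrt (sqdist m z w) + sqrt (sqdist m w q)"
proof -
  have "L2_set (\<lambda>i. (z i - w i) + (w i - q i)) {..<m}
      \<le> L2_set (\<lambda>i. z i - w i) {..<m} + L2_set (\<lambda>i. w i - q i) {..<m}"
    by (rule L2_set_triangle_ineq)
  then show ?thesis
    by (simp add: sqdist_def L2_set_def)
qed

text \<open>If \<open>z\<close> is at least as close to \<open>p\<close> as to \<open>q\<close>, then so is \<open>z' = p + r (z - p)\<close>:
  \<open>|z' - q| \<ge> |z - q| - |z - z'| \<ge> |z - p| - (1 - r) |z - p| = |z' - p|\<close>.\<close>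

lemma homothety_preserves_closer:
  assumes r: "0 < r" "r \<le> 1"
  shows "sqdist m z p \<le> sqdist m z q \<Longrightarrow> sqdist m (homothety m p r z) p \<le> sqdist m (homothety m p r z) q"
    and "sqdist m z p < sqdist m z q \<Longrightarrow> sqdist m (homothety m p r z) p < sqdist m (homothety m p r z) q"
proof -
  let ?z' = "homothety m p r z"
  have "sqrt (sqdist m ?z' p) = r * sqrt (sqdist m z p)"
    using r by (simp add: sqdist_homothety real_sqrt_mult)
  moreover have "sqdist m z ?z' = (1 - r)\<^sup>2 * sqdist m z p"
    unfolding sqdist_def homothety_def
    by (simp add: sum_distrib_left power_mult_distrib[symmetric] algebra_simps)
  then have "sqrt (sqdist m z ?z') = (1 - r) * sqrt (sqdist m z p)"
    using r by (simp add: real_sqrt_mult)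
  moreover have "sqrt (sqdist m z q) \<le> sqrt (sqdist m z ?z') + sqrt (sqdist m ?z' q)"
    by (rule sqrt_sqdist_triangle)
  ultimately have "sqrt (sqdist m z q) - sqrt (sqdist m z p) \<le> sqrt (sqdist m ?z' q) - sqrt (sqdist m ?z' p)"
    by (simp add: algebra_simps)
  then show "sqdist m z p \<le> sqdist m z q \<Longrightarrow> sqdist m ?z' p \<le> sqdist m ?z' q"
    and "sqdist m z p < sqdist m z q \<Longrightarrow> sqdist m ?z' p < sqdist m ?z' q"
    by (smt (verit) real_sqrt_le_mono real_sqrt_less_mono)+
qed

text \<open>Ties are broken in favour of the smallest index, so that the cells are disjoint.\<close>

definition voronoi_cell :: "nat \<Rightarrow> nat \<Rightarrow> (nat \<Rightarrow> nat \<Rightarrow> real) \<Rightarrow> nat \<Rightarrow> (nat \<Rightarrow> real) set" where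
  "voronoi_cell m k p j = {z \<in> space (lebesgue_dim m).
     (\<forall>q<k. sqdist m z (p j) \<le> sqdist m z (p q)) \<and> (\<forall>q<j. sqdist m z (p j) < sqdist m z (p q))}"

lemma sets_voronoi_cell [measurable]: "voronoi_cell m k p j \<in> sets (lebesgue_dim m)"
proof -
  have "voronoi_cell m k p j = {z \<in> space (lebesgue_dim m).
      (\<forall>q\<in>{..<k}. sqdist m z (p j) \<le> sqdist m z (p q)) \<and> (\<forall>q\<in>{..<j}. sqdist m z (p j) < sqdist m z (p q))}"
    by (auto simp: voronoi_cell_def)
  then show ?thesis
    by (simp only:) (intro sets.sets_Collect_conj sets.sets_Collect_finite_All borel_measurable_le
        borel_measurable_less borel_measurable_sqdist finite_lessThan)
qed

lemma disjoint_family_voronoi_cell: "disjoint_family_on (voronoi_cell m k p) {..<k}"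
proof -
  have False if "j < j'" "j' < k" "z \<in> voronoi_cell m k p j" "z \<in> voronoi_cell m k p j'" for j j' z
    using that unfolding voronoi_cell_def by force
  then show ?thesis
    unfolding disjoint_family_on_def by (metis disjoint_iff lessThan_iff nat_neq_iff)
qed

lemma voronoi_cell_cover:
  assumes "k > 0" and z: "z \<in> space (lebesgue_dim m)"
  obtains j where "j < k" "z \<in> voronoi_cell m k p j"
proof -
  define nearest where "nearest j \<longleftrightarrow> j < k \<and> (\<forall>q<k. sqdist m z (p j) \<le> sqdist m z (p q))" for j
  have "Min ((\<lambda>q. sqdist m z (p q)) ` {..<k}) \<in> (\<lambda>q. sqdist m z (p q)) ` {..<k}"
    using \<open>k > 0\<close> by (intro Min_in) auto
  then obtain j0 where "j0 < k" "sqdist m z (p j0) = Min ((\<lambda>q. sqdist m z (p q)) ` {..<k})"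
    by auto
  then have "nearest j0"
    unfolding nearest_def by simp
  define j where "j = (LEAST j. nearest j)"
  have "nearest j"
    unfolding j_def by (rule LeastI) fact
  moreover have "sqdist m z (p j) < sqdist m z (p q)" if "q < j" for q
  proof -
    have "q < k"
      using \<open>nearest j\<close> that unfolding nearest_def by simp
    moreover have "\<not> nearest q"
      using that unfolding j_def by (rule not_less_Least)
    ultimately show ?thesis
      using \<open>nearest j\<close> unfolding nearest_def by (meson le_less_trans not_le)
  qed
  ultimately show ?thesis
    using z that unfolding nearest_def voronoi_cell_def by blast
qed

lemma star_shaped_voronoi_cell: "star_shaped_at m (p j) (voronoi_cell m k p j)"
  unfolding star_shaped_at_def voronoi_cell_def
  using homothety_preserves_closer by (auto simp: homothety_def space_PiM)

lemma union_balls_eq_union_voronoi_parts: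
  assumes "k > 0"
  shows "{z \<in> space (lebesgue_dim m). \<exists>j<k. sqdist m z (p j) \<le> \<rho>\<^sup>2}
         = (\<Union>j<k. {z \<in> voronoi_cell m k p j. sqdist m z (p j) \<le> \<rho>\<^sup>2})"
proof (intro equalityI subsetI)
  fix z assume "z \<in> {z \<in> space (lebesgue_dim m). \<exists>j<k. sqdist m z (p j) \<le> \<rho>\<^sup>2}"
  then obtain j where z: "z \<in> space (lebesgue_dim m)" and "j < k" "sqdist m z (p j) \<le> \<rho>\<^sup>2"
    by blast
  moreover obtain j' where "j' < k" "z \<in> voronoi_cell m k p j'"
    using voronoi_cell_cover[OF assms z] .
  ultimately show "z \<in> (\<Union>j<k. {z \<in> voronoi_cell m k p j. sqdist m z (p j) \<le> \<rho>\<^sup>2})"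
    unfolding voronoi_cell_def by force
qed (auto simp: voronoi_cell_def)

lemma emeasure_union_balls_le_union_unit_balls:
  fixes p :: "nat \<Rightarrow> nat \<Rightarrow> real" and s :: "nat \<Rightarrow> real"
  assumes k: "k > 0" and \<rho>: "\<rho> \<ge> 1"
  shows "ennreal (ball_vol (Suc m)) * ennreal ((1 / \<rho>) ^ m) *
           emeasure (lebesgue_dim m) {z \<in> space (lebesgue_dim m). \<exists>j<k. sqdist m z (p j) \<le> \<rho>\<^sup>2}
         \<le> ennreal (ball_vol m) * emeasure (lebesgue_dim m \<Otimes>\<^sub>M lborel)
             {x \<in> space (lebesgue_dim m \<Otimes>\<^sub>M lborel). \<exists>j<k. sqdist m (fst x) (p j) + (snd x - s j)\<^sup>2 \<le> 1}"
proof -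
  let ?M = "lebesgue_dim m" and ?X = "lebesgue_dim m \<Otimes>\<^sub>M lborel"
  let ?c = "ennreal (ball_vol (Suc m)) * ennreal ((1 / \<rho>) ^ m)"
  define H where "H j = {z \<in> voronoi_cell m k p j. sqdist m z (p j) \<le> \<rho>\<^sup>2}" for j
  define G where "G j = {x \<in> space ?X. fst x \<in> voronoi_cell m k p j \<and> sqdist m (fst x) (p j) + (snd x - s j)\<^sup>2 \<le> 1}" for j
  have H: "H j \<in> sets ?M" and G: "G j \<in> sets ?X" for j
    unfolding H_def G_def by measurable
  have "{z \<in> space ?M. \<exists>j<k. sqdist m z (p j) \<le> \<rho>\<^sup>2} = (\<Union>j<k. H j)"
    unfolding H_def by (rule union_balls_eq_union_voronoi_parts[OF k])
  moreover have "disjoint_family_on H {..<k}" "disjoint_family_on G {..<k}"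
    using disjoint_family_voronoi_cell[of m k p] unfolding disjoint_family_on_def H_def G_def by blast+
  ultimately have "?c * emeasure ?M {z \<in> space ?M. \<exists>j<k. sqdist m z (p j) \<le> \<rho>\<^sup>2} = ?c * (\<Sum>j<k. emeasure ?M (H j))"
    using H by (simp add: sum_emeasure image_subset_iff)
  also have "\<dots> \<le> (\<Sum>j<k. ennreal (ball_vol m) * emeasure ?X (G j))"
    unfolding sum_distrib_left H_def G_def
    by (intro sum_mono emeasure_star_shaped_le_unit_ball_over sets_voronoi_cell star_shaped_voronoi_cell \<rho>)
  also have "\<dots> = ennreal (ball_vol m) * emeasure ?X (\<Union>j<k. G j)"
    using G \<open>disjoint_family_on G {..<k}\<close> by (simp add: sum_distrib_left[symmetric] sum_emeasure image_subset_iff)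
  also have "\<dots> \<le> ennreal (ball_vol m) * emeasure ?X
      {x \<in> space ?X. \<exists>j<k. sqdist m (fst x) (p j) + (snd x - s j)\<^sup>2 \<le> 1}"
  proof (intro mult_left_mono emeasure_mono)
    show "(\<Union>j<k. G j) \<subseteq> {x \<in> space ?X. \<exists>j<k. sqdist m (fst x) (p j) + (snd x - s j)\<^sup>2 \<le> 1}"
      by (auto simp: G_def)
  qed measurable
  finally show ?thesis .
qed

section \<open>Borel measures that agree with Lebesgue measure on balls\<close>

lemma emeasure_cball_scale:
  fixes x :: "'a::euclidean_space"
  assumes "c \<ge> 0" "r \<ge> 0"
  shows "emeasure lborel (cball x (c * r)) = ennreal (c ^ DIM('a)) * emeasure lborel (cball x r)"
  using assms by (simp add: emeasure_cball ennreal_mult'[symmetric] power_mult_distrib mult_ac)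

lemma emeasure_UN_countable_le:
  assumes I: "countable I" and X: "\<And>i. i \<in> I \<Longrightarrow> X i \<in> sets M"
  shows "emeasure M (\<Union>i\<in>I. X i) \<le> (\<integral>\<^sup>+i. emeasure M (X i) \<partial>count_space I)"
proof -
  have "emeasure M (\<Union>i\<in>I. X i) = (\<integral>\<^sup>+x. indicator (\<Union>i\<in>I. X i) x \<partial>M)"
    using I X by (intro nn_integral_indicator[symmetric] sets.countable_UN') auto
  also have "\<dots> \<le> (\<integral>\<^sup>+x. (\<integral>\<^sup>+i. indicator (X i) x \<partial>count_space I) \<partial>M)"
  proof (intro nn_integral_mono)
    fix x
    show "indicator (\<Union>i\<in>I. X i) x \<le> (\<integral>\<^sup>+i. indicator (X i) x \<partial>count_space I)"
    proof (cases "x \<in> (\<Union>i\<in>I. X i)")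
      case True
      then obtain j where "j \<in> I" "x \<in> X j"
        by blast
      then have "indicator (\<Union>i\<in>I. X i) x = (indicator (X j) x :: ennreal)"
        by (auto simp: indicator_def)
      also have "\<dots> \<le> (\<integral>\<^sup>+i. indicator (X i) x \<partial>count_space I)"
        by (rule nn_integral_ge_point[OF \<open>j \<in> I\<close>])
      finally show ?thesis .
    qed simp
  qed
  also have "\<dots> = (\<integral>\<^sup>+i. emeasure M (X i) \<partial>count_space I)"
    using X by (subst nn_integral_count_space_nn_integral[OF I]) (auto intro!: nn_integral_cong)
  finally show ?thesis .
qed

context
  fixes M :: "'a::euclidean_space measure"
  assumes sets_M: "sets M = sets borel"
    and emeasure_M_cball: "\<And>c r. 0 < r \<Longrightarrow> emeasure M (cball c r) = emeasure lborel (cball c r)"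
begin

text \<open>By the Vitali lemma, countably many disjoint balls inside \<open>U\<close>, enlarged five times, cover \<open>N\<close>.\<close>

lemma emeasure_le_lborel_open_superset:
  assumes U: "open U" "N \<subseteq> U"
  shows "emeasure M N \<le> ennreal (5 ^ DIM('a)) * emeasure lborel U"
proof -
  obtain r where r: "\<And>x. x \<in> N \<Longrightarrow> 0 < r x \<and> r x \<le> 1 \<and> cball x (r x) \<subseteq> U"
  proof -
    have "\<forall>x\<in>N. \<exists>r>0. cball x r \<subseteq> U"
      using U open_contains_cball by blast
    then obtain r where "\<And>x. x \<in> N \<Longrightarrow> r x > 0 \<and> cball x (r x) \<subseteq> U"
      by metis
    then show ?thesis
      by (intro that[of "\<lambda>x. min 1 (r x)"]) force
  qed
  obtain C where C: "countable C" "C \<subseteq> N"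
    "pairwise (\<lambda>i j. disjnt (cball i (r i)) (cball j (r j))) C"
    "N \<subseteq> (\<Union>i\<in>C. cball i (5 * r i))"
    using Vitali_covering_lemma_cballs[where S = N and K = N and a = "\<lambda>x. x" and r = r and B = 1] r
    by force
  have "emeasure M N \<le> emeasure M (\<Union>i\<in>C. cball i (5 * r i))"
    using C sets_M by (intro emeasure_mono) (auto intro: sets.countable_UN')
  also have "\<dots> \<le> (\<integral>\<^sup>+i. emeasure M (cball i (5 * r i)) \<partial>count_space C)"
    using C sets_M by (intro emeasure_UN_countable_le) auto
  also have "\<dots> = (\<integral>\<^sup>+i. ennreal (5 ^ DIM('a)) * emeasure lborel (cball i (r i)) \<partial>count_space C)"
  proof (intro nn_integral_cong)
    fix i assume "i \<in> space (count_space C)"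
    then have "0 < r i"
      using C(2) r by auto
    then show "emeasure M (cball i (5 * r i)) = ennreal (5 ^ DIM('a)) * emeasure lborel (cball i (r i))"
      by (simp add: emeasure_M_cball emeasure_cball_scale)
  qed
  also have "\<dots> = ennreal (5 ^ DIM('a)) * (\<integral>\<^sup>+i. emeasure lborel (cball i (r i)) \<partial>count_space C)"
    by (rule nn_integral_cmult) simp
  also have "(\<integral>\<^sup>+i. emeasure lborel (cball i (r i)) \<partial>count_space C) = emeasure lborel (\<Union>i\<in>C. cball i (r i))"
    using C(1,3) unfolding pairwise_def disjnt_def
    by (intro emeasure_UN_countable[symmetric]) (auto simp: disjoint_family_on_def)
  also have "emeasure lborel (\<Union>i\<in>C. cball i (r i)) \<le> emeasure lborel U"
  proof (rule emeasure_mono)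
    show "(\<Union>i\<in>C. cball i (r i)) \<subseteq> U"
      using C(2) r by blast
  qed (simp add: U(1) borel_open)
  finally show ?thesis
    by (simp add: mult_left_mono)
qed

lemma emeasure_eq_0_if_lborel_null:
  assumes N: "N \<in> sets borel" and N0: "emeasure lborel N = 0"
  shows "emeasure M N = 0"
proof -
  have "emeasure M N \<le> ennreal e" if "e > 0" for e
  proof -
    obtain U where U: "open U" "N \<subseteq> U" "emeasure lebesgue (U - N) < ennreal (e / 5 ^ DIM('a))"
      using sets_lebesgue_outer_open[of N "e / 5 ^ DIM('a)"] N \<open>e > 0\<close> by auto
    have "emeasure lborel U \<le> emeasure lborel N + emeasure lborel (U - N)"
      using U N by (intro emeasure_subadditive[THEN order_trans[rotated]] emeasure_mono) auto
    then have "emeasure lborel U \<le> ennreal (e / 5 ^ DIM('a))"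
      using U N N0 by simp
    then have "emeasure M N \<le> ennreal (5 ^ DIM('a)) * ennreal (e / 5 ^ DIM('a))"
      using emeasure_le_lborel_open_superset[OF U(1,2)] by (simp add: mult_left_mono order_trans)
    also have "\<dots> = ennreal e"
      using \<open>0 < e\<close> by (subst ennreal_mult[symmetric]) auto
    finally show ?thesis .
  qed
  then show ?thesis
    by (metis ennreal_le_epsilon add_0 le_zero_eq)
qed

lemma emeasure_open_eq_lborel:
  assumes U: "open U"
  shows "emeasure M U = emeasure lborel U"
proof -
  define K where "K = {i :: 'a \<times> real. snd i > 0 \<and> cball (fst i) (snd i) \<subseteq> U}"
  have fine: "\<exists>i. i \<in> K \<and> x \<in> cball (fst i) (snd i) \<and> snd i < d" if "x \<in> U" "0 < d" for x d
  proof -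
    obtain e where "e > 0" "cball x e \<subseteq> U"
      using U \<open>x \<in> U\<close> open_contains_cball by blast
    then show ?thesis
      using \<open>0 < d\<close> by (intro exI[of _ "(x, min e (d / 2))"]) (auto simp: K_def)
  qed
  obtain C where C: "countable C" "C \<subseteq> K"
     "pairwise (\<lambda>i j. disjnt (cball (fst i) (snd i)) (cball (fst j) (snd j))) C"
     "negligible (U - (\<Union>i\<in>C. cball (fst i) (snd i)))"
    using Vitali_covering_theorem_cballs[of K snd U fst] fine by (auto simp: K_def)
  define W where "W = (\<Union>i\<in>C. cball (fst i) (snd i))"
  have W: "W \<in> sets borel" "W \<subseteq> U"
    using C(1,2) by (auto simp: W_def K_def intro: sets.countable_UN')
  have "U - W \<in> null_sets lborel"
    using C(4) U W by (simp add: W_def negligible_iff_null_sets null_sets_completion_iff)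
  then have null: "emeasure lborel (U - W) = 0" "emeasure M (U - W) = 0"
    using U W by (auto intro: emeasure_eq_0_if_lborel_null)
  have disj: "disjoint_family_on (\<lambda>i. cball (fst i) (snd i)) C"
    using C(3) unfolding disjoint_family_on_def pairwise_def disjnt_def by blast
  have "emeasure M W = (\<integral>\<^sup>+i. emeasure M (cball (fst i) (snd i)) \<partial>count_space C)"
    unfolding W_def using C(1) disj sets_M by (intro emeasure_UN_countable) auto
  also have "\<dots> = (\<integral>\<^sup>+i. emeasure lborel (cball (fst i) (snd i)) \<partial>count_space C)"
    using C(2) by (intro nn_integral_cong) (auto simp: K_def emeasure_M_cball)
  also have "\<dots> = emeasure lborel W"
    unfolding W_def using C(1) disj by (intro emeasure_UN_countable[symmetric]) auto
  finally have "emeasure M W = emeasure lborel W" .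
  moreover have "U = W \<union> (U - W)"
    using W by blast
  ultimately show ?thesis
    using U W null sets_M by (metis plus_emeasure Diff_disjoint borel_open sets.Diff sets_lborel)
qed

lemma measure_eq_lborel_if_cball: "M = lborel"
proof (rule measure_eqI_generator_eq[where E = "{S. open S}" and \<Omega> = UNIV and A = "\<lambda>i. ball 0 (real i)"])
  show "Int_stable {S :: 'a set. open S}"
    by (auto simp: Int_stable_def)
  show "(\<Union>i. ball (0::'a) (real i)) = UNIV"
  proof (intro set_eqI iffI)
    fix x :: 'a
    obtain n where "norm x < real n"
      using reals_Archimedean2 by blast
    then show "x \<in> (\<Union>i. ball 0 (real i))"
      by auto
  qed auto
  show "emeasure M (ball 0 (real i)) \<noteq> \<infinity>" for i
    using emeasure_open_eq_lborel[of "ball 0 (real i)"] emeasure_lborel_ball_finite[of "0::'a" "real i"] by simp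
qed (auto simp: emeasure_open_eq_lborel sets_M sets_borel)

end

section \<open>Coordinates adapted to a hyperplane\<close>

lemma perp_onb_exists:
  fixes u :: "'a::euclidean_space"
  assumes u: "norm u = 1"
  shows "\<exists>b. perp_onb u b"
proof -
  have "u \<noteq> 0"
    using u by auto
  obtain B where B: "B \<subseteq> {x. u \<bullet> x = 0}" "pairwise orthogonal B"
      "\<And>x. x \<in> B \<Longrightarrow> norm x = 1" "independent B" "card B = dim {x. u \<bullet> x = 0}"
    using orthonormal_basis_subspace[OF subspace_hyperplane[of u]] by metis
  have card_B: "card B = DIM('a) - 1"
    using B(5) dim_hyperplane[OF \<open>u \<noteq> 0\<close>] by simp
  obtain h where h: "bij_betw h {0..<card B} B"
    using ex_bij_betw_nat_finite[OF independent_imp_finite[OF B(4)]] by blast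
  have "perp_onb u h"
    unfolding perp_onb_def
  proof (intro conjI allI impI)
    fix i j assume i: "i < DIM('a) - 1"
    then have "h i \<in> B"
      using h card_B by (auto simp: bij_betw_def)
    then show "h i \<bullet> u = 0" "norm (h i) = 1"
      using B(1,3) by (auto simp: inner_commute)
    assume j: "j < DIM('a) - 1" and "i \<noteq> j"
    then have "h i \<noteq> h j" "h j \<in> B"
      using h i card_B unfolding bij_betw_def inj_on_def by auto
    then show "h i \<bullet> h j = 0"
      using B(2) \<open>h i \<in> B\<close> unfolding pairwise_def orthogonal_def by blast
  qed
  then show ?thesis
    by blast
qed

lemma linear_proj_perp: "linear (proj_perp u)"
  by (rule linearI) (simp_all add: proj_perp_def algebra_simps)

lemma norm_proj_perp_le:
  assumes "norm u = 1"
  shows "norm (proj_perp u x) \<le> norm x"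
proof -
  have "orthogonal (proj_perp u x) ((x \<bullet> u) *\<^sub>R u)"
    using assms by (simp add: orthogonal_def proj_perp_def inner_diff_left norm_eq_1)
  then have "(norm (proj_perp u x + (x \<bullet> u) *\<^sub>R u))\<^sup>2 = (norm (proj_perp u x))\<^sup>2 + (norm ((x \<bullet> u) *\<^sub>R u))\<^sup>2"
    by (rule norm_add_Pythagorean)
  moreover have "proj_perp u x + (x \<bullet> u) *\<^sub>R u = x"
    by (simp add: proj_perp_def)
  ultimately have "(norm (proj_perp u x))\<^sup>2 \<le> (norm x)\<^sup>2"
    by simp
  then show ?thesis
    by (rule power2_le_imp_le) simp
qed

lemma compact_minkowski_sum:
  fixes A B :: "'a::real_normed_vector set"
  shows "compact A \<Longrightarrow> compact B \<Longrightarrow> compact (minkowski_sum A B)"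
  unfolding minkowski_sum_def by (rule compact_sums)

lemma cball_subset_minkowski_sum:
  fixes A :: "'a::real_normed_vector set"
  assumes "x \<in> A"
  shows "cball x r \<subseteq> minkowski_sum A (cball 0 r)"
proof
  fix y assume "y \<in> cball x r"
  then have "y = x + (y - x)" "y - x \<in> cball 0 r"
    by (auto simp: dist_norm norm_minus_commute)
  then show "y \<in> minkowski_sum A (cball 0 r)"
    using assms unfolding minkowski_sum_def by blast
qed

definition lincomb :: "nat \<Rightarrow> (nat \<Rightarrow> 'a::real_vector) \<Rightarrow> (nat \<Rightarrow> real) \<Rightarrow> 'a" where
  "lincomb m b y = (\<Sum>i<m. y i *\<^sub>R b i)"

definition frame_map :: "nat \<Rightarrow> (nat \<Rightarrow> 'a::real_vector) \<Rightarrow> 'a \<Rightarrow> (nat \<Rightarrow> real) \<times> real \<Rightarrow> 'a" where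
  "frame_map m b u x = lincomb m b (fst x) + snd x *\<^sub>R u"

locale hyperplane_frame =
  fixes u :: "'a::euclidean_space" and b :: "nat \<Rightarrow> 'a" and m :: nat
  assumes norm_u: "norm u = 1" and perp_onb: "perp_onb u b" and dim_m: "m = DIM('a) - 1"
begin

lemma DIM_eq: "DIM('a) = Suc m"
  using dim_m DIM_positive[where 'a = 'a] by simp

lemma inner_u_u [simp]: "u \<bullet> u = 1"
  using norm_u by (simp add: norm_eq_1)

lemma inner_basis_u [simp]: "i < m \<Longrightarrow> b i \<bullet> u = 0" "i < m \<Longrightarrow> u \<bullet> b i = 0"
  using perp_onb dim_m unfolding perp_onb_def by (auto simp: inner_commute)

lemma inner_basis: "i < m \<Longrightarrow> j < m \<Longrightarrow> b i \<bullet> b j = (if i = j then 1 else 0)"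
  using perp_onb dim_m unfolding perp_onb_def by (auto simp: norm_eq_1)

lemma inner_lincomb_basis: "j < m \<Longrightarrow> lincomb m b y \<bullet> b j = y j"
  by (simp add: lincomb_def inner_sum_left inner_basis if_distrib cong: if_cong)

lemma inner_lincomb_u [simp]: "lincomb m b y \<bullet> u = 0"
  by (simp add: lincomb_def inner_sum_left)

lemma lincomb_diff: "lincomb m b y - lincomb m b y' = lincomb m b (\<lambda>i. y i - y' i)"
  by (simp add: lincomb_def sum_subtractf[symmetric] scaleR_diff_left)

lemma norm_frame_map_diff_sq:
  "(norm (frame_map m b u x - frame_map m b u x'))\<^sup>2 = sqdist m (fst x) (fst x') + (snd x - snd x')\<^sup>2"
proof -
  define w where "w = (\<lambda>i. fst x i - fst x' i)"
  have diff: "frame_map m b u x - frame_map m b u x' = lincomb m b w + (snd x - snd x') *\<^sub>R u"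
    by (simp add: frame_map_def w_def lincomb_diff[symmetric] algebra_simps)
  have "lincomb m b w \<bullet> lincomb m b w = (\<Sum>i<m. w i * (lincomb m b w \<bullet> b i))"
    by (simp add: lincomb_def inner_sum_right)
  also have "\<dots> = sqdist m (fst x) (fst x')"
    by (simp add: inner_lincomb_basis sqdist_def w_def power2_eq_square)
  moreover have "lincomb m b w \<bullet> u = 0"
    by simp
  ultimately show ?thesis
    unfolding diff power2_norm_eq_inner
    by (simp add: inner_add_left inner_add_right inner_commute power2_eq_square)
qed

lemma frame_map_mem_cball_iff:
  "r \<ge> 0 \<Longrightarrow> frame_map m b u x \<in> cball (frame_map m b u c) r
     \<longleftrightarrow> sqdist m (fst x) (fst c) + (snd x - snd c)\<^sup>2 \<le> r\<^sup>2"
  using norm_frame_map_diff_sq[of x c] power2_le_iff_abs_le[of r "norm (frame_map m b u x - frame_map m b u c)"]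
  by (simp add: dist_norm norm_minus_commute)

lemma dist_lincomb_le_iff:
  "r \<ge> 0 \<Longrightarrow> dist (lincomb m b y) (lincomb m b p) \<le> r \<longleftrightarrow> sqdist m y p \<le> r\<^sup>2"
  using frame_map_mem_cball_iff[of r "(y, 0)" "(p, 0)"] by (simp add: frame_map_def dist_commute)

lemma span_frame: "span (insert u (b ` {..<m})) = UNIV"
proof -
  have "inj_on b {..<m}"
    unfolding inj_on_def using inner_basis by (metis lessThan_iff zero_neq_one)
  moreover have "u \<notin> b ` {..<m}"
    using inner_basis_u(1) inner_u_u by (metis imageE lessThan_iff zero_neq_one)
  ultimately have "card (insert u (b ` {..<m})) = DIM('a)"
    by (simp add: card_image DIM_eq)
  moreover have "independent (insert u (b ` {..<m}))"
  proof (rule pairwise_orthogonal_independent)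
    show "pairwise orthogonal (insert u (b ` {..<m}))"
      unfolding pairwise_def orthogonal_def by (auto simp: inner_basis inner_commute)
    have "b i \<noteq> 0" if "i < m" for i
      using inner_basis[OF that that] by auto
    then show "0 \<notin> insert u (b ` {..<m})"
      using norm_u by auto
  qed
  ultimately show ?thesis
    using card_ge_dim_independent[of "insert u (b ` {..<m})" UNIV] by auto
qed

definition frame_coords :: "'a \<Rightarrow> (nat \<Rightarrow> real) \<times> real" where
  "frame_coords x = ((\<lambda>i\<in>{..<m}. x \<bullet> b i), x \<bullet> u)"

lemma frame_map_coords: "frame_map m b u (frame_coords x) = x"
proof -
  define w where "w = x - frame_map m b u (frame_coords x)"
  have "w \<bullet> u = 0"
    by (simp add: w_def frame_map_def frame_coords_def inner_diff_left inner_add_left)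
  moreover have "w \<bullet> b j = 0" if "j < m" for j
    using that by (simp add: w_def frame_map_def frame_coords_def inner_diff_left inner_add_left inner_lincomb_basis)
  ultimately have "orthogonal w v" if "v \<in> insert u (b ` {..<m})" for v
    using that unfolding orthogonal_def by blast
  moreover have "w \<in> span (insert u (b ` {..<m}))"
    by (simp add: span_frame)
  ultimately have "orthogonal w w"
    by (metis orthogonal_to_span)
  then show ?thesis
    by (simp add: w_def orthogonal_self)
qed

lemma proj_perp_frame_map: "proj_perp u (frame_map m b u x) = lincomb m b (fst x)"
  by (simp add: proj_perp_def frame_map_def inner_add_left)

lemma proj_perp_lincomb: "proj_perp u (lincomb m b y) = lincomb m b y"
  by (simp add: proj_perp_def)

lemma measurable_lincomb [measurable]: "lincomb m b \<in> lebesgue_dim m \<rightarrow>\<^sub>M borel"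
  unfolding lincomb_def by measurable

lemma measurable_frame_map [measurable]: "frame_map m b u \<in> lebesgue_dim m \<Otimes>\<^sub>M lborel \<rightarrow>\<^sub>M borel"
  unfolding frame_map_def by measurable

lemma distr_frame_map: "distr (lebesgue_dim m \<Otimes>\<^sub>M lborel) borel (frame_map m b u) = lborel"
proof (rule measure_eq_lborel_if_cball)
  fix c :: 'a and r :: real assume "0 < r"
  let ?X = "lebesgue_dim m \<Otimes>\<^sub>M lborel"
  have "frame_map m b u -` cball c r \<inter> space ?X
      = {x \<in> space ?X. sqdist m (fst x) (fst (frame_coords c)) + (snd x - snd (frame_coords c))\<^sup>2 \<le> r\<^sup>2}"
    using frame_map_mem_cball_iff[of r _ "frame_coords c"] \<open>0 < r\<close> by (auto simp: frame_map_coords)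
  then show "emeasure (distr ?X borel (frame_map m b u)) (cball c r) = emeasure lborel (cball c r)"
    using \<open>0 < r\<close> by (simp add: emeasure_distr emeasure_pair_sqdist_ball emeasure_cball DIM_eq)
qed simp

lemma emeasure_frame_map_vimage:
  "S \<in> sets borel \<Longrightarrow> emeasure lborel S
     = emeasure (lebesgue_dim m \<Otimes>\<^sub>M lborel) (frame_map m b u -` S \<inter> space (lebesgue_dim m \<Otimes>\<^sub>M lborel))"
  by (subst distr_frame_map[symmetric]) (simp add: emeasure_distr)

text \<open>The coordinate description of the projection \<open>P\<^sub>u\<^sub>\<bottom> S\<close>, as in \<^const>\<open>hyperplane_vol\<close>.\<close>

definition shadow :: "'a set \<Rightarrow> (nat \<Rightarrow> real) set" where
  "shadow S = {y \<in> space (lebesgue_dim m). lincomb m b y \<in> proj_perp u ` S}"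

lemma shadow_subset_union_balls:
  assumes "K \<subseteq> (\<Union>j<k. ball (c j) \<delta>)"
  shows "shadow (minkowski_sum K (cball 0 1))
         \<subseteq> {y \<in> space (lebesgue_dim m). \<exists>j<k. sqdist m y (fst (frame_coords (c j))) \<le> (\<delta> + 1)\<^sup>2}"
proof
  fix y assume "y \<in> shadow (minkowski_sum K (cball 0 1))"
  then obtain x w where y: "y \<in> space (lebesgue_dim m)" and "x \<in> K" "norm w \<le> 1"
    and "lincomb m b y = proj_perp u (x + w)"
    unfolding shadow_def minkowski_sum_def by auto
  moreover obtain j where "j < k" "dist (c j) x < \<delta>"
    using assms \<open>x \<in> K\<close> by auto
  moreover have "proj_perp u (c j) = lincomb m b (fst (frame_coords (c j)))"
    by (metis frame_map_coords proj_perp_frame_map)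
  ultimately have "dist (lincomb m b y) (lincomb m b (fst (frame_coords (c j)))) = norm (proj_perp u (x + w - c j))"
    by (simp add: dist_norm linear_diff[OF linear_proj_perp])
  also have "\<dots> \<le> norm ((x - c j) + w)"
    using norm_proj_perp_le[OF norm_u] by (simp add: algebra_simps)
  also have "\<dots> \<le> norm (x - c j) + norm w"
    by (rule norm_triangle_ineq)
  also have "\<dots> \<le> \<delta> + 1"
    using \<open>dist (c j) x < \<delta>\<close> \<open>norm w \<le> 1\<close> by (simp add: dist_norm norm_minus_commute)
  finally have "dist (lincomb m b y) (lincomb m b (fst (frame_coords (c j)))) \<le> \<delta> + 1" .
  moreover have "\<delta> + 1 \<ge> 0"
    using \<open>dist (c j) x < \<delta>\<close> zero_le_dist[of "c j" x] by linarith
  ultimately have "sqdist m y (fst (frame_coords (c j))) \<le> (\<delta> + 1)\<^sup>2"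
    using dist_lincomb_le_iff by simp
  then show "y \<in> {y \<in> space (lebesgue_dim m). \<exists>j<k. sqdist m y (fst (frame_coords (c j))) \<le> (\<delta> + 1)\<^sup>2}"
    using y \<open>j < k\<close> by blast
qed

lemma emeasure_shadow_le:
  assumes K: "compact K" "K \<noteq> {}" and \<rho>: "\<rho> > 1"
  shows "ennreal (ball_vol (Suc m)) * ennreal ((1 / \<rho>) ^ m) *
           emeasure (lebesgue_dim m) (shadow (minkowski_sum K (cball 0 1)))
         \<le> ennreal (ball_vol m) * emeasure lborel (minkowski_sum K (cball 0 1))"
proof -
  let ?X = "lebesgue_dim m \<Otimes>\<^sub>M lborel"
  obtain F where F: "F \<subseteq> K" "finite F" "K \<subseteq> (\<Union>x\<in>F. ball x (\<rho> - 1))"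
    using compactE_image[OF K(1), of K "\<lambda>x. ball x (\<rho> - 1)"] \<rho> by force
  obtain k :: nat and c where Fc: "F = c ` {..<k}"
    using finite_imp_nat_seg_image_inj_on[OF F(2)] by (metis lessThan_def)
  have "k > 0"
    using F(3) K(2) Fc by (auto intro: gr0I)
  define p where "p j = fst (frame_coords (c j))" for j
  define s where "s j = snd (frame_coords (c j))" for j
  have "frame_map m b u -` (\<Union>j<k. cball (c j) 1) \<inter> space ?X
      = {x \<in> space ?X. \<exists>j<k. sqdist m (fst x) (p j) + (snd x - s j)\<^sup>2 \<le> 1}"
    using frame_map_mem_cball_iff[of 1 _ "frame_coords (c _)"] by (auto simp: frame_map_coords p_def s_def)
  then have balls: "emeasure lborel (\<Union>j<k. cball (c j) 1)
      = emeasure ?X {x \<in> space ?X. \<exists>j<k. sqdist m (fst x) (p j) + (snd x - s j)\<^sup>2 \<le> 1}"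
    by (simp add: emeasure_frame_map_vimage)
  have "shadow (minkowski_sum K (cball 0 1)) \<subseteq> {y \<in> space (lebesgue_dim m). \<exists>j<k. sqdist m y (p j) \<le> \<rho>\<^sup>2}"
    using shadow_subset_union_balls[where c = c and \<delta> = "\<rho> - 1" and k = k] F(3) Fc by (simp add: p_def)
  then have "ennreal (ball_vol (Suc m)) * ennreal ((1 / \<rho>) ^ m) * emeasure (lebesgue_dim m) (shadow (minkowski_sum K (cball 0 1)))
      \<le> ennreal (ball_vol (Suc m)) * ennreal ((1 / \<rho>) ^ m) *
        emeasure (lebesgue_dim m) {y \<in> space (lebesgue_dim m). \<exists>j<k. sqdist m y (p j) \<le> \<rho>\<^sup>2}"
    by (intro mult_left_mono emeasure_mono) (simp_all, measurable)
  also have "\<dots> \<le> ennreal (ball_vol m) * emeasure lborel (\<Union>j<k. cball (c j) 1)"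
    unfolding balls using \<open>k > 0\<close> \<rho> by (intro emeasure_union_balls_le_union_unit_balls) auto
  also have "\<dots> \<le> ennreal (ball_vol m) * emeasure lborel (minkowski_sum K (cball 0 1))"
  proof (intro mult_left_mono emeasure_mono)
    show "(\<Union>j<k. cball (c j) 1) \<subseteq> minkowski_sum K (cball 0 1)"
      using F(1) Fc cball_subset_minkowski_sum by blast
    show "minkowski_sum K (cball 0 1) \<in> sets lborel"
      using compact_minkowski_sum[OF K(1) compact_cball] by (simp add: borel_compact)
  qed simp
  finally show ?thesis .
qed

lemma sets_shadow_compact:
  assumes "compact S"
  shows "shadow S \<in> sets (lebesgue_dim m)"
proof -
  have "compact (proj_perp u ` S)"
    using assms linear_continuous_on[OF linear_conv_bounded_linear[THEN iffD1, OF linear_proj_perp]]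
    by (rule compact_continuous_image[rotated])
  then have "proj_perp u ` S \<in> sets borel"
    by (simp add: borel_compact)
  then show ?thesis
    unfolding shadow_def by measurable
qed

lemma ball_vol_le_emeasure_shadow:
  assumes "compact K" and "x \<in> K"
  shows "ennreal (ball_vol m) \<le> emeasure (lebesgue_dim m) (shadow (minkowski_sum K (cball 0 1)))"
proof -
  define p where "p = fst (frame_coords x)"
  have "{z \<in> space (lebesgue_dim m). sqdist m z p \<le> 1\<^sup>2} \<subseteq> shadow (minkowski_sum K (cball 0 1))"
  proof
    fix z assume z: "z \<in> {z \<in> space (lebesgue_dim m). sqdist m z p \<le> 1\<^sup>2}"
    define w where "w = lincomb m b z - lincomb m b p"
    have "norm w \<le> 1"
      using z dist_lincomb_le_iff[of 1 z p] by (simp add: w_def dist_norm)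
    then have "x + w \<in> minkowski_sum K (cball 0 1)"
      using \<open>x \<in> K\<close> unfolding minkowski_sum_def by force
    moreover have "proj_perp u (x + w) = lincomb m b z"
      using proj_perp_frame_map[of "frame_coords x"]
      by (simp add: linear_add[OF linear_proj_perp] linear_diff[OF linear_proj_perp] frame_map_coords
          w_def proj_perp_lincomb p_def)
    ultimately show "z \<in> shadow (minkowski_sum K (cball 0 1))"
      using z unfolding shadow_def by (metis (mono_tags, lifting) image_eqI mem_Collect_eq)
  qed
  then have "emeasure (lebesgue_dim m) {z \<in> space (lebesgue_dim m). sqdist m z p \<le> 1\<^sup>2}
      \<le> emeasure (lebesgue_dim m) (shadow (minkowski_sum K (cball 0 1)))"
    using sets_shadow_compact[OF compact_minkowski_sum[OF \<open>compact K\<close> compact_cball]]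
    by (rule emeasure_mono)
  then show ?thesis
    using emeasure_sqdist_ball[of 1 m p] by simp
qed

lemma measure_shadow_bounds:
  assumes "compact K" "K \<noteq> {}"
  defines "E \<equiv> minkowski_sum K (cball 0 1)"
  shows "ball_vol m \<le> measure (lebesgue_dim m) (shadow E)"
    and "ball_vol (Suc m) * measure (lebesgue_dim m) (shadow E) \<le> ball_vol m * measure lebesgue E"
proof -
  have "compact E"
    unfolding E_def using assms(1) by (intro compact_minkowski_sum) auto
  then have "emeasure lborel E < \<infinity>" "E \<in> sets borel"
    using emeasure_bounded_finite[OF compact_imp_bounded] by (simp_all add: borel_compact)
  then have E: "emeasure lborel E = ennreal (measure lebesgue E)"
    by (simp add: emeasure_eq_ennreal_measure)
  have scaled: "ennreal (ball_vol (Suc m) * (1 / \<rho>) ^ m) * emeasure (lebesgue_dim m) (shadow E)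
      \<le> ennreal (ball_vol m * measure lebesgue E)" if "\<rho> > 1" for \<rho>
    using emeasure_shadow_le[OF assms(1,2) that] that unfolding E_def[symmetric] E
    by (simp add: ennreal_mult')
  have "emeasure (lebesgue_dim m) (shadow E) \<noteq> \<infinity>"
  proof
    assume "emeasure (lebesgue_dim m) (shadow E) = \<infinity>"
    moreover have "ball_vol (Suc m) \<noteq> 0"
      using unit_ball_vol_pos[of "real (Suc m)"] by linarith
    ultimately show False
      using scaled[of 2] by (simp add: ennreal_mult_top top_unique)
  qed
  then have shadow: "emeasure (lebesgue_dim m) (shadow E) = ennreal (measure (lebesgue_dim m) (shadow E))"
    by (simp add: emeasure_eq_ennreal_measure)
  obtain x where "x \<in> K"
    using assms(2) by blast
  then show "ball_vol m \<le> measure (lebesgue_dim m) (shadow E)"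
    using ball_vol_le_emeasure_shadow[OF assms(1)] unfolding E_def[symmetric] shadow
    by simp
  show "ball_vol (Suc m) * measure (lebesgue_dim m) (shadow E) \<le> ball_vol m * measure lebesgue E"
  proof (rule le_if_scaled_le)
    fix \<rho> :: real assume "1 < \<rho>"
    then show "ball_vol (Suc m) * measure (lebesgue_dim m) (shadow E) * (1 / \<rho>) ^ m \<le> ball_vol m * measure lebesgue E"
      using scaled[of \<rho>] unfolding shadow
      by (simp add: ennreal_mult''[symmetric] mult_ac)
  qed
qed

end

theorem theorem4p15:
  fixes K :: "'a::euclidean_space set" and u :: 'a
  assumes "compact K" and "K \<noteq> {}" and "norm u = 1"
  shows "measure lebesgue (minkowski_sum K (cball 0 1))
           / hyperplane_vol u (proj_perp u ` minkowski_sum K (cball 0 1))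
         \<ge> measure lebesgue (cball (0::'a) 1) / unit_ball_vol (DIM('a) - 1)"
proof -
  define m where "m = DIM('a) - 1"
  define b where "b = (SOME b. perp_onb u b)"
  have "perp_onb u b"
    unfolding b_def using perp_onb_exists[OF assms(3)] by (rule someI_ex)
  then interpret hyperplane_frame u b m
    using assms(3) by unfold_locales (simp_all add: m_def)
  define E where "E = minkowski_sum K (cball (0::'a) 1)"
  have shadow: "hyperplane_vol u (proj_perp u ` E) = measure (lebesgue_dim m) (shadow E)"
    unfolding hyperplane_vol_def Let_def shadow_def b_def[symmetric] m_def[symmetric] lincomb_def
    by (simp add: space_PiM)
  have ball: "measure lebesgue (cball (0::'a) 1) = ball_vol (Suc m)"
    by (simp add: content_cball DIM_eq)
  have unit_ball: "unit_ball_vol (DIM('a) - 1) = ball_vol m"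
    by (simp add: unit_ball_vol_eq m_def)
  note bounds = measure_shadow_bounds[OF assms(1,2), folded E_def]
  have "ball_vol m > 0"
    by simp
  moreover from this have "measure (lebesgue_dim m) (shadow E) > 0"
    using bounds(1) by linarith
  ultimately show ?thesis
    unfolding E_def[symmetric] shadow ball unit_ball using bounds(2)
    by (simp add: field_simps)
qed

end
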